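(* Let $\mathcal F$ be an exact category with enough injective objects and $\mathcal M$ a subcategory of $\mathcal F$. Then there exists a subcategory $\mathcal N$ such that $(\mathcal M,\mathcal N)$ is a complete cotorsion pair in $\mathcal F$ if and only if $\mathcal M$ is special precovering and idempotent complete (closed under direct summands) in $\mathcal F$.
   Context: A pair $(\mathcal M,\mathcal N)$ of full subcategories of an exact category $\mathcal F$ is a complete cotorsion pair if $\mathcal N=\mathrm{Ker}\,\mathrm{Ext}^1_{\mathcal F}(\mathcal M,-)$, $\mathcal M=\mathrm{Ker}\,\mathrm{Ext}^1_{\mathcal F}(-,\mathcal N)$, $\mathcal M$ is special precovering (every $X\in\mathcal F$ fits in a conflation $0\to N_1\to M_1\to X\to0$ with $M_1\in\mathcal M$, $N_1\in\mathcal N$) and $\mathcal N$ is special preenveloping (every $X$ fits in a conflation $0\to X\to N_2\to M_2\to0$ with $N_2\in\mathcal N$, $M_2\in\mathcal M$). For a single subcategory $\mathcal M$, "special precovering" means every $X\in\mathcal F$ fits in a conflation $0\to K\to M\to X\to 0$ with $M\in\mathcal M$ and $\mathrm{Ext}^1_{\mathcal F}(\mathcal M,K)=0$. *)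

theory Defs
  imports Main
begin

text \<open>Objects have type 'o, morphisms
type 'm. cmp C g f is the composite g after f. A conflation is a tuple
(A, B, X, i, d) standing for the kernel-cokernel pair A --i--> B --d--> X.\<close>

record ('o, 'm) excat =
  Obj  :: "'o set"
  Hom  :: "'o \<Rightarrow> 'o \<Rightarrow> 'm set"
  cmp  :: "'m \<Rightarrow> 'm \<Rightarrow> 'm"
  idm  :: "'o \<Rightarrow> 'm"
  zer  :: "'o \<Rightarrow> 'o \<Rightarrow> 'm"
  pls  :: "'m \<Rightarrow> 'm \<Rightarrow> 'm"
  neg  :: "'m \<Rightarrow> 'm"
  Conf :: "('o \<times> 'o \<times> 'o \<times> 'm \<times> 'm) set"

definition is_category :: "('o, 'm) excat \<Rightarrow> bool" where
  "is_category C \<longleftrightarrow>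
     (\<forall>X Y. Hom C X Y \<noteq> {} \<longrightarrow> X \<in> Obj C \<and> Y \<in> Obj C) \<and>
     (\<forall>X \<in> Obj C. idm C X \<in> Hom C X X) \<and>
     (\<forall>X Y Z f g. f \<in> Hom C X Y \<and> g \<in> Hom C Y Z \<longrightarrow> cmp C g f \<in> Hom C X Z) \<and>
     (\<forall>W X Y Z f g h. f \<in> Hom C W X \<and> g \<in> Hom C X Y \<and> h \<in> Hom C Y Z \<longrightarrow>
         cmp C h (cmp C g f) = cmp C (cmp C h g) f) \<and>
     (\<forall>X Y f. f \<in> Hom C X Y \<longrightarrow> cmp C (idm C Y) f = f \<and> cmp C f (idm C X) = f)"

definition is_preadditive :: "('o, 'm) excat \<Rightarrow> bool" where
  "is_preadditive C \<longleftrightarrow> is_category C \<and>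
     (\<forall>X \<in> Obj C. \<forall>Y \<in> Obj C.
        zer C X Y \<in> Hom C X Y \<and>
        (\<forall>f \<in> Hom C X Y. \<forall>g \<in> Hom C X Y. pls C f g \<in> Hom C X Y) \<and>
        (\<forall>f \<in> Hom C X Y. neg C f \<in> Hom C X Y) \<and>
        (\<forall>f \<in> Hom C X Y. \<forall>g \<in> Hom C X Y. \<forall>h \<in> Hom C X Y.
            pls C (pls C f g) h = pls C f (pls C g h)) \<and>
        (\<forall>f \<in> Hom C X Y. \<forall>g \<in> Hom C X Y. pls C f g = pls C g f) \<and>
        (\<forall>f \<in> Hom C X Y. pls C f (zer C X Y) = f) \<and>
        (\<forall>f \<in> Hom C X Y. pls C f (neg C f) = zer C X Y)) \<and>
     (\<forall>X Y Z f g g'. f \<in> Hom C X Y \<and> g \<in> Hom C Y Z \<and> g' \<in> Hom C Y Z \<longrightarrow>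
         cmp C (pls C g g') f = pls C (cmp C g f) (cmp C g' f)) \<and>
     (\<forall>X Y Z f f' g. f \<in> Hom C X Y \<and> f' \<in> Hom C X Y \<and> g \<in> Hom C Y Z \<longrightarrow>
         cmp C g (pls C f f') = pls C (cmp C g f) (cmp C g f'))"

definition is_zero_object :: "('o, 'm) excat \<Rightarrow> 'o \<Rightarrow> bool" where
  "is_zero_object C Z \<longleftrightarrow> Z \<in> Obj C \<and>
     (\<forall>X \<in> Obj C. Hom C Z X = {zer C Z X} \<and> Hom C X Z = {zer C X Z})"

definition is_biproduct ::
  "('o, 'm) excat \<Rightarrow> 'o \<Rightarrow> 'o \<Rightarrow> 'o \<Rightarrow> 'm \<Rightarrow> 'm \<Rightarrow> 'm \<Rightarrow> 'm \<Rightarrow> bool" where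
  "is_biproduct C A B S i1 i2 p1 p2 \<longleftrightarrow>
     A \<in> Obj C \<and> B \<in> Obj C \<and> S \<in> Obj C \<and>
     i1 \<in> Hom C A S \<and> i2 \<in> Hom C B S \<and> p1 \<in> Hom C S A \<and> p2 \<in> Hom C S B \<and>
     cmp C p1 i1 = idm C A \<and> cmp C p2 i2 = idm C B \<and>
     cmp C p1 i2 = zer C B A \<and> cmp C p2 i1 = zer C A B \<and>
     pls C (cmp C i1 p1) (cmp C i2 p2) = idm C S"

definition is_additive :: "('o, 'm) excat \<Rightarrow> bool" where
  "is_additive C \<longleftrightarrow> is_preadditive C \<and> (\<exists>Z. is_zero_object C Z) \<and>
     (\<forall>A \<in> Obj C. \<forall>B \<in> Obj C. \<exists>S i1 i2 p1 p2. is_biproduct C A B S i1 i2 p1 p2)"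

definition is_kernel :: "('o, 'm) excat \<Rightarrow> 'm \<Rightarrow> 'o \<Rightarrow> 'o \<Rightarrow> 'm \<Rightarrow> 'o \<Rightarrow> bool" where
  "is_kernel C i A B d X \<longleftrightarrow>
     i \<in> Hom C A B \<and> d \<in> Hom C B X \<and> cmp C d i = zer C A X \<and>
     (\<forall>T \<in> Obj C. \<forall>f \<in> Hom C T B. cmp C d f = zer C T X \<longrightarrow>
        (\<exists>g \<in> Hom C T A. cmp C i g = f \<and> (\<forall>g' \<in> Hom C T A. cmp C i g' = f \<longrightarrow> g' = g)))"

definition is_cokernel :: "('o, 'm) excat \<Rightarrow> 'm \<Rightarrow> 'o \<Rightarrow> 'o \<Rightarrow> 'm \<Rightarrow> 'o \<Rightarrow> bool" where
  "is_cokernel C i A B d X \<longleftrightarrow>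
     i \<in> Hom C A B \<and> d \<in> Hom C B X \<and> cmp C d i = zer C A X \<and>
     (\<forall>T \<in> Obj C. \<forall>f \<in> Hom C B T. cmp C f i = zer C A T \<longrightarrow>
        (\<exists>g \<in> Hom C X T. cmp C g d = f \<and> (\<forall>g' \<in> Hom C X T. cmp C g' d = f \<longrightarrow> g' = g)))"

definition is_kc_pair :: "('o, 'm) excat \<Rightarrow> 'o \<Rightarrow> 'o \<Rightarrow> 'o \<Rightarrow> 'm \<Rightarrow> 'm \<Rightarrow> bool" where
  "is_kc_pair C A B X i d \<longleftrightarrow> is_kernel C i A B d X \<and> is_cokernel C i A B d X"

definition is_iso :: "('o, 'm) excat \<Rightarrow> 'm \<Rightarrow> 'o \<Rightarrow> 'o \<Rightarrow> bool" where
  "is_iso C f X Y \<longleftrightarrow> f \<in> Hom C X Y \<and>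
     (\<exists>g \<in> Hom C Y X. cmp C g f = idm C X \<and> cmp C f g = idm C Y)"

definition inflation :: "('o, 'm) excat \<Rightarrow> 'm \<Rightarrow> 'o \<Rightarrow> 'o \<Rightarrow> bool" where
  "inflation C i A B \<longleftrightarrow> (\<exists>X d. (A, B, X, i, d) \<in> Conf C)"

definition deflation :: "('o, 'm) excat \<Rightarrow> 'm \<Rightarrow> 'o \<Rightarrow> 'o \<Rightarrow> bool" where
  "deflation C d B X \<longleftrightarrow> (\<exists>A i. (A, B, X, i, d) \<in> Conf C)"

definition is_pushout ::
  "('o, 'm) excat \<Rightarrow> 'm \<Rightarrow> 'o \<Rightarrow> 'o \<Rightarrow> 'm \<Rightarrow> 'o \<Rightarrow> 'o \<Rightarrow> 'm \<Rightarrow> 'm \<Rightarrow> bool" where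
  "is_pushout C i A B f A' P i' f' \<longleftrightarrow>
     i \<in> Hom C A B \<and> f \<in> Hom C A A' \<and> i' \<in> Hom C A' P \<and> f' \<in> Hom C B P \<and>
     cmp C f' i = cmp C i' f \<and>
     (\<forall>T \<in> Obj C. \<forall>u \<in> Hom C B T. \<forall>v \<in> Hom C A' T. cmp C u i = cmp C v f \<longrightarrow>
        (\<exists>w \<in> Hom C P T. cmp C w f' = u \<and> cmp C w i' = v \<and>
           (\<forall>w' \<in> Hom C P T. cmp C w' f' = u \<and> cmp C w' i' = v \<longrightarrow> w' = w)))"

definition is_pullback ::
  "('o, 'm) excat \<Rightarrow> 'm \<Rightarrow> 'o \<Rightarrow> 'o \<Rightarrow> 'm \<Rightarrow> 'o \<Rightarrow> 'o \<Rightarrow> 'm \<Rightarrow> 'm \<Rightarrow> bool" where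
  "is_pullback C d B X g X' Q d' g' \<longleftrightarrow>
     d \<in> Hom C B X \<and> g \<in> Hom C X' X \<and> d' \<in> Hom C Q X' \<and> g' \<in> Hom C Q B \<and>
     cmp C d g' = cmp C g d' \<and>
     (\<forall>T \<in> Obj C. \<forall>u \<in> Hom C T B. \<forall>v \<in> Hom C T X'. cmp C d u = cmp C g v \<longrightarrow>
        (\<exists>w \<in> Hom C T Q. cmp C g' w = u \<and> cmp C d' w = v \<and>
           (\<forall>w' \<in> Hom C T Q. cmp C g' w' = u \<and> cmp C d' w' = v \<longrightarrow> w' = w)))"

text \<open>Quillen's axioms for an exact structure (as in Buehler, Exact categories).\<close>
definition exact_category :: "('o, 'm) excat \<Rightarrow> bool" where
  "exact_category C \<longleftrightarrow> is_additive C \<and>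
     \<comment> \<open>conflations are kernel-cokernel pairs\<close>
     (\<forall>A B X i d. (A, B, X, i, d) \<in> Conf C \<longrightarrow> is_kc_pair C A B X i d) \<and>
     \<comment> \<open>closed under isomorphisms of kernel-cokernel pairs\<close>
     (\<forall>A B X i d A' B' X' i' d' a b c. (A, B, X, i, d) \<in> Conf C \<and> is_kc_pair C A' B' X' i' d' \<and>
        is_iso C a A A' \<and> is_iso C b B B' \<and> is_iso C c X X' \<and>
        cmp C b i = cmp C i' a \<and> cmp C c d = cmp C d' b \<longrightarrow> (A', B', X', i', d') \<in> Conf C) \<and>
     \<comment> \<open>E0, E0op\<close>
     (\<forall>A \<in> Obj C. inflation C (idm C A) A A) \<and>
     (\<forall>A \<in> Obj C. deflation C (idm C A) A A) \<and>
     \<comment> \<open>E1, E1op\<close>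
     (\<forall>A B D i j. inflation C i A B \<and> inflation C j B D \<longrightarrow> inflation C (cmp C j i) A D) \<and>
     (\<forall>A B D d e. deflation C d A B \<and> deflation C e B D \<longrightarrow> deflation C (cmp C e d) A D) \<and>
     \<comment> \<open>E2: pushouts of inflations exist and are inflations\<close>
     (\<forall>A B A' i f. inflation C i A B \<and> f \<in> Hom C A A' \<longrightarrow>
        (\<exists>P i' f'. is_pushout C i A B f A' P i' f' \<and> inflation C i' A' P)) \<and>
     \<comment> \<open>E2op: pullbacks of deflations exist and are deflations\<close>
     (\<forall>B X X' d g. deflation C d B X \<and> g \<in> Hom C X' X \<longrightarrow>
        (\<exists>Q d' g'. is_pullback C d B X g X' Q d' g' \<and> deflation C d' Q X'))"

text \<open>Ext^1(X, Y) = 0: every conflation Y >-> B ->> X splits, i.e. every element of the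
Yoneda Ext group Ext^1(X, Y) is the class of the split conflation.\<close>
definition ext1_zero :: "('o, 'm) excat \<Rightarrow> 'o \<Rightarrow> 'o \<Rightarrow> bool" where
  "ext1_zero C X Y \<longleftrightarrow>
     (\<forall>B i d. (Y, B, X, i, d) \<in> Conf C \<longrightarrow> (\<exists>s \<in> Hom C X B. cmp C d s = idm C X))"

definition right_perp :: "('o, 'm) excat \<Rightarrow> 'o set \<Rightarrow> 'o set" where
  "right_perp C M = {Y \<in> Obj C. \<forall>X \<in> M. ext1_zero C X Y}"

definition left_perp :: "('o, 'm) excat \<Rightarrow> 'o set \<Rightarrow> 'o set" where
  "left_perp C N = {X \<in> Obj C. \<forall>Y \<in> N. ext1_zero C X Y}"

definition complete_cotorsion_pair :: "('o, 'm) excat \<Rightarrow> 'o set \<Rightarrow> 'o set \<Rightarrow> bool" where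
  "complete_cotorsion_pair C M N \<longleftrightarrow>
     N = right_perp C M \<and> M = left_perp C N \<and>
     (\<forall>X \<in> Obj C. \<exists>N1 M1 i d. (N1, M1, X, i, d) \<in> Conf C \<and> M1 \<in> M \<and> N1 \<in> N) \<and>
     (\<forall>X \<in> Obj C. \<exists>N2 M2 i d. (X, N2, M2, i, d) \<in> Conf C \<and> N2 \<in> N \<and> M2 \<in> M)"

definition special_precovering :: "('o, 'm) excat \<Rightarrow> 'o set \<Rightarrow> bool" where
  "special_precovering C M \<longleftrightarrow>
     (\<forall>X \<in> Obj C. \<exists>K M0 i d. (K, M0, X, i, d) \<in> Conf C \<and> M0 \<in> M \<and>
        (\<forall>M' \<in> M. ext1_zero C M' K))"

definition closed_under_summands :: "('o, 'm) excat \<Rightarrow> 'o set \<Rightarrow> bool" where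
  "closed_under_summands C M \<longleftrightarrow>
     (\<forall>S \<in> M. \<forall>A B i1 i2 p1 p2. is_biproduct C A B S i1 i2 p1 p2 \<longrightarrow> A \<in> M)"

definition injective_object :: "('o, 'm) excat \<Rightarrow> 'o \<Rightarrow> bool" where
  "injective_object C I \<longleftrightarrow> I \<in> Obj C \<and>
     (\<forall>A B X i d f. (A, B, X, i, d) \<in> Conf C \<and> f \<in> Hom C A I \<longrightarrow>
        (\<exists>g \<in> Hom C B I. cmp C g i = f))"

definition enough_injectives :: "('o, 'm) excat \<Rightarrow> bool" where
  "enough_injectives C \<longleftrightarrow>
     (\<forall>X \<in> Obj C. \<exists>I Y i d. (X, I, Y, i, d) \<in> Conf C \<and> injective_object C I)"

end

theory Submission
  imports Defs
begin

text \<open>If (M, N) is a complete cotorsion pair, M = \<perp>N is closed under summands because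
  vanishing of Ext^1(-, Y) passes to retracts, and special precovers are part of the data.
  Conversely put N = M\<perp>. For X \<in> \<perp>N, a special M-precover K >-> M0 ->> X splits since K \<in> N,
  so X is a summand of M0 and lies in M; thus M = \<perp>(M\<perp>). Special N-preenvelopes come from
  Salce's argument: embed X into an injective I, take a special M-precover K >-> M0 ->> I/X and
  pull it back along I ->> I/X. The pullback P fits into X >-> P ->> M0 and into K >-> P ->> I,
  and the latter forces Ext^1(M, P) = 0 because I is injective.\<close>

section \<open>Additive calculus in an exact category\<close>

locale exact_cat =
  fixes C :: "('o, 'm) excat"
  assumes exact_category: "exact_category C"
begin

lemma is_preadditive: "is_preadditive C"
  using exact_category unfolding exact_category_def is_additive_def by blast

lemma is_category: "is_category C"
  using is_preadditive unfolding is_preadditive_def by blast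

lemma dom_in_Obj: "f \<in> Hom C X Y \<Longrightarrow> X \<in> Obj C"
  and cod_in_Obj: "f \<in> Hom C X Y \<Longrightarrow> Y \<in> Obj C"
  using is_category unfolding is_category_def by blast+

lemma idm_in_Hom [intro]: "X \<in> Obj C \<Longrightarrow> idm C X \<in> Hom C X X"
  and cmp_in_Hom [intro]: "f \<in> Hom C X Y \<Longrightarrow> g \<in> Hom C Y Z \<Longrightarrow> cmp C g f \<in> Hom C X Z"
  and idm_cmp: "f \<in> Hom C X Y \<Longrightarrow> cmp C (idm C Y) f = f"
  and cmp_idm: "f \<in> Hom C X Y \<Longrightarrow> cmp C f (idm C X) = f"
  using is_category unfolding is_category_def by blast+

lemma cmp_assoc:
  "f \<in> Hom C W X \<Longrightarrow> g \<in> Hom C X Y \<Longrightarrow> h \<in> Hom C Y Z \<Longrightarrow>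
   cmp C (cmp C h g) f = cmp C h (cmp C g f)"
  using is_category unfolding is_category_def by metis

lemma hom_group:
  assumes "X \<in> Obj C" "Y \<in> Obj C"
  shows "zer C X Y \<in> Hom C X Y"
    and "f \<in> Hom C X Y \<Longrightarrow> g \<in> Hom C X Y \<Longrightarrow> pls C f g \<in> Hom C X Y"
    and "f \<in> Hom C X Y \<Longrightarrow> neg C f \<in> Hom C X Y"
    and "f \<in> Hom C X Y \<Longrightarrow> g \<in> Hom C X Y \<Longrightarrow> h \<in> Hom C X Y \<Longrightarrow>
         pls C (pls C f g) h = pls C f (pls C g h)"
    and "f \<in> Hom C X Y \<Longrightarrow> g \<in> Hom C X Y \<Longrightarrow> pls C f g = pls C g f"
    and "f \<in> Hom C X Y \<Longrightarrow> pls C f (zer C X Y) = f"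
    and "f \<in> Hom C X Y \<Longrightarrow> pls C f (neg C f) = zer C X Y"
  using is_preadditive[unfolded is_preadditive_def, THEN conjunct2, THEN conjunct1,
      rule_format, OF assms]
  by blast+

lemma zer_in_Hom [intro]: "X \<in> Obj C \<Longrightarrow> Y \<in> Obj C \<Longrightarrow> zer C X Y \<in> Hom C X Y"
  by (fact hom_group(1))

lemma pls_in_Hom [intro]: "f \<in> Hom C X Y \<Longrightarrow> g \<in> Hom C X Y \<Longrightarrow> pls C f g \<in> Hom C X Y"
  and neg_in_Hom [intro]: "f \<in> Hom C X Y \<Longrightarrow> neg C f \<in> Hom C X Y"
  and pls_assoc: "f \<in> Hom C X Y \<Longrightarrow> g \<in> Hom C X Y \<Longrightarrow> h \<in> Hom C X Y \<Longrightarrow>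
    pls C (pls C f g) h = pls C f (pls C g h)"
  and pls_commute: "f \<in> Hom C X Y \<Longrightarrow> g \<in> Hom C X Y \<Longrightarrow> pls C f g = pls C g f"
  and pls_zer: "f \<in> Hom C X Y \<Longrightarrow> pls C f (zer C X Y) = f"
  and pls_neg: "f \<in> Hom C X Y \<Longrightarrow> pls C f (neg C f) = zer C X Y"
  by (rule hom_group[OF dom_in_Obj cod_in_Obj]; assumption)+

lemma cmp_pls_left:
    "f \<in> Hom C X Y \<Longrightarrow> g \<in> Hom C Y Z \<Longrightarrow> g' \<in> Hom C Y Z \<Longrightarrow>
     cmp C (pls C g g') f = pls C (cmp C g f) (cmp C g' f)"
  and cmp_pls_right:
    "f \<in> Hom C X Y \<Longrightarrow> f' \<in> Hom C X Y \<Longrightarrow> g \<in> Hom C Y Z \<Longrightarrow>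
     cmp C g (pls C f f') = pls C (cmp C g f) (cmp C g f')"
  using is_preadditive unfolding is_preadditive_def by blast+

lemma pls_idem_eq_zer:
  assumes a: "a \<in> Hom C X Y" and aa: "pls C a a = a"
  shows "a = zer C X Y"
proof -
  have "a = pls C a (pls C a (neg C a))" using a by (simp add: pls_neg pls_zer)
  also have "\<dots> = pls C (pls C a a) (neg C a)" using a by (simp add: pls_assoc neg_in_Hom)
  also have "\<dots> = zer C X Y" using a aa by (simp add: pls_neg)
  finally show ?thesis .
qed

lemma zer_pls: "f \<in> Hom C X Y \<Longrightarrow> pls C (zer C X Y) f = f"
  by (metis cod_in_Obj dom_in_Obj pls_commute pls_zer zer_in_Hom)

lemma neg_unique:
  assumes a: "a \<in> Hom C X Y" and b: "b \<in> Hom C X Y" and ab: "pls C a b = zer C X Y"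
  shows "b = neg C a"
proof -
  have "b = pls C b (pls C a (neg C a))" using a b by (simp add: pls_neg pls_zer)
  also have "\<dots> = pls C (pls C a b) (neg C a)" using a b by (metis pls_assoc pls_commute neg_in_Hom)
  also have "\<dots> = neg C a" using a ab by (simp add: zer_pls neg_in_Hom)
  finally show ?thesis .
qed

lemma neg_zer: "X \<in> Obj C \<Longrightarrow> Y \<in> Obj C \<Longrightarrow> neg C (zer C X Y) = zer C X Y"
  using neg_unique pls_zer zer_in_Hom by metis

lemma zer_cmp:
  assumes f: "f \<in> Hom C X Y" and Z: "Z \<in> Obj C"
  shows "cmp C (zer C Y Z) f = zer C X Z"
proof -
  have z: "zer C Y Z \<in> Hom C Y Z" using cod_in_Obj[OF f] Z by blast
  then have "cmp C (zer C Y Z) f = pls C (cmp C (zer C Y Z) f) (cmp C (zer C Y Z) f)"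
    using f by (metis cmp_pls_left pls_zer)
  then show ?thesis using f z by (metis cmp_in_Hom pls_idem_eq_zer)
qed

lemma cmp_zer:
  assumes f: "f \<in> Hom C Y Z" and W: "W \<in> Obj C"
  shows "cmp C f (zer C W Y) = zer C W Z"
proof -
  have z: "zer C W Y \<in> Hom C W Y" using dom_in_Obj[OF f] W by blast
  then have "cmp C f (zer C W Y) = pls C (cmp C f (zer C W Y)) (cmp C f (zer C W Y))"
    using f by (metis cmp_pls_right pls_zer)
  then show ?thesis using f z by (metis cmp_in_Hom pls_idem_eq_zer)
qed

lemma neg_cmp:
  assumes f: "f \<in> Hom C X Y" and h: "h \<in> Hom C Y Z"
  shows "cmp C (neg C h) f = neg C (cmp C h f)"
proof -
  have "pls C (cmp C h f) (cmp C (neg C h) f) = cmp C (pls C h (neg C h)) f"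
    using f h by (simp add: cmp_pls_left neg_in_Hom)
  also have "\<dots> = zer C X Z" using f h by (simp add: pls_neg zer_cmp cod_in_Obj)
  finally show ?thesis using f h by (intro neg_unique) auto
qed

lemma cmp_neg:
  assumes f: "f \<in> Hom C X Y" and h: "h \<in> Hom C Y Z"
  shows "cmp C h (neg C f) = neg C (cmp C h f)"
proof -
  have "pls C (cmp C h f) (cmp C h (neg C f)) = cmp C h (pls C f (neg C f))"
    using f h by (simp add: cmp_pls_right neg_in_Hom)
  also have "\<dots> = zer C X Z" using f h by (simp add: pls_neg cmp_zer dom_in_Obj)
  finally show ?thesis using f h by (intro neg_unique) auto
qed

lemma kernelD:
  assumes "is_kernel C i A B d X"
  shows "i \<in> Hom C A B" "d \<in> Hom C B X" "cmp C d i = zer C A X"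
  using assms unfolding is_kernel_def by auto

lemma cokernelD:
  assumes "is_cokernel C i A B d X"
  shows "i \<in> Hom C A B" "d \<in> Hom C B X" "cmp C d i = zer C A X"
  using assms unfolding is_cokernel_def by auto

lemma kernel_factor:
  assumes "is_kernel C i A B d X" "f \<in> Hom C T B" "cmp C d f = zer C T X"
  shows "\<exists>g \<in> Hom C T A. cmp C i g = f"
  using assms dom_in_Obj unfolding is_kernel_def by blast

lemma cokernel_factor:
  assumes "is_cokernel C i A B d X" "f \<in> Hom C B T" "cmp C f i = zer C A T"
  shows "\<exists>g \<in> Hom C X T. cmp C g d = f"
  using assms cod_in_Obj unfolding is_cokernel_def by blast

lemma kernel_cancel:
  assumes k: "is_kernel C i A B d X" and g1: "g1 \<in> Hom C T A" and g2: "g2 \<in> Hom C T A"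
    and eq: "cmp C i g1 = cmp C i g2"
  shows "g1 = g2"
proof -
  note kerD = kernelD[OF k]
  have "cmp C d (cmp C i g1) = zer C T X"
    using cmp_assoc[OF g1 kerD(1,2)] zer_cmp[OF g1 cod_in_Obj[OF kerD(2)]] kerD(3) by simp
  then show ?thesis
    using k g1 g2 eq dom_in_Obj[OF g1] kerD(1) unfolding is_kernel_def by (metis cmp_in_Hom)
qed

lemma cokernel_cancel:
  assumes k: "is_cokernel C i A B d X" and g1: "g1 \<in> Hom C X T" and g2: "g2 \<in> Hom C X T"
    and eq: "cmp C g1 d = cmp C g2 d"
  shows "g1 = g2"
proof -
  note cokerD = cokernelD[OF k]
  have "cmp C (cmp C g1 d) i = zer C A T"
    using cmp_assoc[OF cokerD(1,2) g1] cmp_zer[OF g1 dom_in_Obj[OF cokerD(1)]] cokerD(3) by simp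
  then show ?thesis
    using k g1 g2 eq cod_in_Obj[OF g1] cokerD(2) unfolding is_cokernel_def by (metis cmp_in_Hom)
qed

lemma is_kernelI:
  assumes "i \<in> Hom C A B" "d \<in> Hom C B X" "cmp C d i = zer C A X"
    and "\<And>T f. T \<in> Obj C \<Longrightarrow> f \<in> Hom C T B \<Longrightarrow> cmp C d f = zer C T X \<Longrightarrow>
           \<exists>g \<in> Hom C T A. cmp C i g = f"
    and "\<And>T g g'. g \<in> Hom C T A \<Longrightarrow> g' \<in> Hom C T A \<Longrightarrow> cmp C i g = cmp C i g' \<Longrightarrow> g = g'"
  shows "is_kernel C i A B d X"
  using assms unfolding is_kernel_def by metis

lemma is_cokernelI:
  assumes "i \<in> Hom C A B" "d \<in> Hom C B X" "cmp C d i = zer C A X"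
    and "\<And>T f. T \<in> Obj C \<Longrightarrow> f \<in> Hom C B T \<Longrightarrow> cmp C f i = zer C A T \<Longrightarrow>
           \<exists>g \<in> Hom C X T. cmp C g d = f"
    and "\<And>T g g'. g \<in> Hom C X T \<Longrightarrow> g' \<in> Hom C X T \<Longrightarrow> cmp C g d = cmp C g' d \<Longrightarrow> g = g'"
  shows "is_cokernel C i A B d X"
  using assms unfolding is_cokernel_def by metis

lemma conflation_kc_pair: "(A, B, X, i, d) \<in> Conf C \<Longrightarrow> is_kc_pair C A B X i d"
  using exact_category[unfolded exact_category_def, THEN conjunct2, THEN conjunct1] by blast

lemma conflation_iso_closed:
  assumes "(A, B, X, i, d) \<in> Conf C" "is_kc_pair C A' B' X' i' d'"
    "is_iso C a A A'" "is_iso C b B B'" "is_iso C c X X'"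
    "cmp C b i = cmp C i' a" "cmp C c d = cmp C d' b"
  shows "(A', B', X', i', d') \<in> Conf C"
  using exact_category[unfolded exact_category_def, THEN conjunct2, THEN conjunct2, THEN conjunct1]
    assms by blast

lemma inflation_cmp:
  "inflation C i A B \<Longrightarrow> inflation C j B D \<Longrightarrow> inflation C (cmp C j i) A D"
  using exact_category[unfolded exact_category_def] by blast

lemma pushout_inflation_exists:
  "inflation C i A B \<Longrightarrow> f \<in> Hom C A A' \<Longrightarrow>
   \<exists>P i' f'. is_pushout C i A B f A' P i' f' \<and> inflation C i' A' P"
  using exact_category[unfolded exact_category_def] by blast

lemma pullback_deflation_exists:
  "deflation C d B X \<Longrightarrow> g \<in> Hom C X' X \<Longrightarrow>
   \<exists>Q d' g'. is_pullback C d B X g X' Q d' g' \<and> deflation C d' Q X'"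
  using exact_category[unfolded exact_category_def] by blast

lemma conflationD:
  assumes "(A, B, X, i, d) \<in> Conf C"
  shows "is_kernel C i A B d X" "is_cokernel C i A B d X" "i \<in> Hom C A B" "d \<in> Hom C B X"
    "cmp C d i = zer C A X" "A \<in> Obj C" "B \<in> Obj C" "X \<in> Obj C"
  using conflation_kc_pair[OF assms] unfolding is_kc_pair_def
  by (auto dest: kernelD dom_in_Obj cod_in_Obj)

lemma idm_is_iso: "X \<in> Obj C \<Longrightarrow> is_iso C (idm C X) X X"
  unfolding is_iso_def using idm_in_Hom idm_cmp by blast

lemma conflation_of_cokernel:
  assumes c: "(A, B, Z, i, e) \<in> Conf C" and coker: "is_cokernel C i A B d X"
  shows "(A, B, X, i, d) \<in> Conf C"
proof -
  note conf = conflationD[OF c] and cokerD = cokernelD[OF coker]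
  have X: "X \<in> Obj C" using cokerD(2) cod_in_Obj by blast
  obtain u where u: "u \<in> Hom C Z X" "cmp C u e = d"
    using cokernel_factor[OF conf(2) cokerD(2,3)] by blast
  obtain v where v: "v \<in> Hom C X Z" "cmp C v d = e"
    using cokernel_factor[OF coker conf(4,5)] by blast
  have "cmp C v u = idm C Z"
    by (rule cokernel_cancel[OF conf(2)]) (use u v conf in \<open>auto simp: cmp_assoc idm_cmp\<close>)
  moreover have "cmp C u v = idm C X"
    by (rule cokernel_cancel[OF coker]) (use u v cokerD X in \<open>auto simp: cmp_assoc idm_cmp\<close>)
  ultimately have iso: "is_iso C u Z X" unfolding is_iso_def using u v by blast
  have ker: "is_kernel C i A B d X"
  proof (rule is_kernelI[OF cokerD])
    fix T f assume T: "T \<in> Obj C" and f: "f \<in> Hom C T B" and df: "cmp C d f = zer C T X"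
    have "cmp C e f = cmp C v (cmp C d f)" using cmp_assoc[OF f cokerD(2) v(1)] v(2) by simp
    then have "cmp C e f = zer C T Z" using df cmp_zer[OF v(1) T] by simp
    then show "\<exists>g \<in> Hom C T A. cmp C i g = f" using kernel_factor[OF conf(1) f] by blast
  qed (use kernel_cancel[OF conf(1)] in blast)
  show ?thesis
    by (rule conflation_iso_closed[OF c _ idm_is_iso[OF conf(6)] idm_is_iso[OF conf(7)] iso])
      (use ker coker conf u idm_cmp[OF conf(3)] cmp_idm[OF conf(3)] cmp_idm[OF cokerD(2)]
        in \<open>auto simp: is_kc_pair_def\<close>)
qed

lemma conflation_of_kernel:
  assumes c: "(A0, B, X, i0, d) \<in> Conf C" and ker: "is_kernel C i A B d X"
  shows "(A, B, X, i, d) \<in> Conf C"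
proof -
  note conf = conflationD[OF c] and kerD = kernelD[OF ker]
  have A: "A \<in> Obj C" using kerD(1) dom_in_Obj by blast
  obtain u where u: "u \<in> Hom C A0 A" "cmp C i u = i0"
    using kernel_factor[OF ker conf(3,5)] by blast
  obtain v where v: "v \<in> Hom C A A0" "cmp C i0 v = i"
    using kernel_factor[OF conf(1) kerD(1,3)] by blast
  have "cmp C v u = idm C A0"
    by (rule kernel_cancel[OF conf(1)]) (use u v conf in \<open>auto simp: cmp_assoc[symmetric] cmp_idm\<close>)
  moreover have "cmp C u v = idm C A"
    by (rule kernel_cancel[OF ker]) (use u v kerD A in \<open>auto simp: cmp_assoc[symmetric] cmp_idm\<close>)
  ultimately have iso: "is_iso C u A0 A" unfolding is_iso_def using u v by blast
  have coker: "is_cokernel C i A B d X"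
  proof (rule is_cokernelI[OF kerD])
    fix T f assume T: "T \<in> Obj C" and f: "f \<in> Hom C B T" and fi: "cmp C f i = zer C A T"
    have "cmp C f i0 = cmp C (cmp C f i) u" using cmp_assoc[OF u(1) kerD(1) f] u(2) by simp
    then have "cmp C f i0 = zer C A0 T" using fi zer_cmp[OF u(1) T] by simp
    then show "\<exists>g \<in> Hom C X T. cmp C g d = f" using cokernel_factor[OF conf(2) f] by blast
  qed (use cokernel_cancel[OF conf(2)] in blast)
  show ?thesis
    by (rule conflation_iso_closed[OF c _ iso idm_is_iso[OF conf(7)] idm_is_iso[OF conf(8)]])
      (use coker ker conf u idm_cmp[OF conf(4)] cmp_idm[OF conf(4)] idm_cmp[OF conf(3)]
        in \<open>auto simp: is_kc_pair_def\<close>)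
qed

lemma kernel_iso_mid:
  assumes ker: "is_kernel C i A B d X" and \<phi>: "\<phi> \<in> Hom C B' B" and \<psi>: "\<psi> \<in> Hom C B B'"
    and \<psi>\<phi>: "cmp C \<psi> \<phi> = idm C B'" and \<phi>\<psi>: "cmp C \<phi> \<psi> = idm C B"
  shows "is_kernel C (cmp C \<psi> i) A B' (cmp C d \<phi>) X"
proof (rule is_kernelI)
  note kerD = kernelD[OF ker]
  show i': "cmp C \<psi> i \<in> Hom C A B'" and "cmp C d \<phi> \<in> Hom C B' X" using kerD \<phi> \<psi> by auto
  have "cmp C (cmp C d \<phi>) (cmp C \<psi> i) = cmp C d (cmp C (cmp C \<phi> \<psi>) i)"
    using cmp_assoc[OF i' \<phi> kerD(2)] cmp_assoc[OF kerD(1) \<psi> \<phi>] by simp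
  then show "cmp C (cmp C d \<phi>) (cmp C \<psi> i) = zer C A X" using \<phi>\<psi> idm_cmp[OF kerD(1)] kerD(3) by simp
next
  fix T f assume f: "f \<in> Hom C T B'" and df: "cmp C (cmp C d \<phi>) f = zer C T X"
  have "cmp C d (cmp C \<phi> f) = zer C T X" using df cmp_assoc[OF f \<phi> kernelD(2)[OF ker]] by simp
  then obtain g where g: "g \<in> Hom C T A" "cmp C i g = cmp C \<phi> f"
    using kernel_factor[OF ker] f \<phi> by blast
  have "cmp C (cmp C \<psi> i) g = cmp C (cmp C \<psi> \<phi>) f"
    using cmp_assoc[OF g(1) kernelD(1)[OF ker] \<psi>] cmp_assoc[OF f \<phi> \<psi>] g(2) by simp
  then show "\<exists>g \<in> Hom C T A. cmp C (cmp C \<psi> i) g = f" using g(1) \<psi>\<phi> idm_cmp[OF f] by auto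
next
  fix T g g' assume g: "g \<in> Hom C T A" and g': "g' \<in> Hom C T A"
    and eq: "cmp C (cmp C \<psi> i) g = cmp C (cmp C \<psi> i) g'"
  have "cmp C i h = cmp C \<phi> (cmp C (cmp C \<psi> i) h)" if h: "h \<in> Hom C T A" for h
    using cmp_assoc[OF h kernelD(1)[OF ker] \<psi>] cmp_assoc[OF _ \<psi> \<phi>, of "cmp C i h"]
      \<phi>\<psi> idm_cmp kernelD(1)[OF ker] h by auto
  then show "g = g'" using kernel_cancel[OF ker g g'] eq g g' by metis
qed

lemma cokernel_iso_mid:
  assumes coker: "is_cokernel C i A B d X" and \<phi>: "\<phi> \<in> Hom C B' B" and \<psi>: "\<psi> \<in> Hom C B B'"
    and \<psi>\<phi>: "cmp C \<psi> \<phi> = idm C B'" and \<phi>\<psi>: "cmp C \<phi> \<psi> = idm C B"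
  shows "is_cokernel C (cmp C \<psi> i) A B' (cmp C d \<phi>) X"
proof (rule is_cokernelI)
  note cokerD = cokernelD[OF coker]
  show i': "cmp C \<psi> i \<in> Hom C A B'" and "cmp C d \<phi> \<in> Hom C B' X" using cokerD \<phi> \<psi> by auto
  have "cmp C (cmp C d \<phi>) (cmp C \<psi> i) = cmp C d (cmp C (cmp C \<phi> \<psi>) i)"
    using cmp_assoc[OF i' \<phi> cokerD(2)] cmp_assoc[OF cokerD(1) \<psi> \<phi>] by simp
  then show "cmp C (cmp C d \<phi>) (cmp C \<psi> i) = zer C A X" using \<phi>\<psi> idm_cmp[OF cokerD(1)] cokerD(3) by simp
next
  fix T f assume f: "f \<in> Hom C B' T" and fi: "cmp C f (cmp C \<psi> i) = zer C A T"
  have "cmp C (cmp C f \<psi>) i = zer C A T" using fi cmp_assoc[OF cokernelD(1)[OF coker] \<psi> f] by simp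
  then obtain g where g: "g \<in> Hom C X T" "cmp C g d = cmp C f \<psi>"
    using cokernel_factor[OF coker] f \<psi> by blast
  have "cmp C g (cmp C d \<phi>) = cmp C f (cmp C \<psi> \<phi>)"
    using cmp_assoc[OF \<phi> cokernelD(2)[OF coker] g(1)] cmp_assoc[OF \<phi> \<psi> f] g(2) by simp
  then show "\<exists>g \<in> Hom C X T. cmp C g (cmp C d \<phi>) = f" using g(1) \<psi>\<phi> cmp_idm[OF f] by auto
next
  fix T g g' assume g: "g \<in> Hom C X T" and g': "g' \<in> Hom C X T"
    and eq: "cmp C g (cmp C d \<phi>) = cmp C g' (cmp C d \<phi>)"
  have "cmp C h d = cmp C (cmp C h (cmp C d \<phi>)) \<psi>" if h: "h \<in> Hom C X T" for h
  proof -
    have hd: "cmp C h d \<in> Hom C B T" using h cokernelD(2)[OF coker] by blast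
    show ?thesis
      using cmp_assoc[OF \<phi> cokernelD(2)[OF coker] h] cmp_assoc[OF \<psi> \<phi> hd] \<phi>\<psi> cmp_idm[OF hd] by simp
  qed
  then show "g = g'" using cokernel_cancel[OF coker g g'] eq g g' by metis
qed

lemma conflation_iso_mid:
  assumes c: "(A, B, X, i, d) \<in> Conf C" and \<phi>: "\<phi> \<in> Hom C B' B" and \<psi>: "\<psi> \<in> Hom C B B'"
    and \<psi>\<phi>: "cmp C \<psi> \<phi> = idm C B'" and \<phi>\<psi>: "cmp C \<phi> \<psi> = idm C B"
  shows "(A, B', X, cmp C \<psi> i, cmp C d \<phi>) \<in> Conf C"
proof (rule conflation_iso_closed[OF c])
  note conf = conflationD[OF c]
  show "is_kc_pair C A B' X (cmp C \<psi> i) (cmp C d \<phi>)"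
    unfolding is_kc_pair_def
    using kernel_iso_mid[OF conf(1) \<phi> \<psi> \<psi>\<phi> \<phi>\<psi>] cokernel_iso_mid[OF conf(2) \<phi> \<psi> \<psi>\<phi> \<phi>\<psi>] by blast
  show "is_iso C \<psi> B B'" unfolding is_iso_def using \<phi> \<psi> \<psi>\<phi> \<phi>\<psi> by blast
  show "cmp C \<psi> i = cmp C (cmp C \<psi> i) (idm C A)" using cmp_idm \<psi> conf(3) by (metis cmp_in_Hom)
  show "cmp C (idm C X) d = cmp C (cmp C d \<phi>) \<psi>"
    using idm_cmp[OF conf(4)] cmp_assoc[OF \<psi> \<phi> conf(4)] \<phi>\<psi> cmp_idm[OF conf(4)] by simp
qed (use idm_is_iso conflationD(6,8)[OF c] in auto)

lemma pullbackD:
  assumes "is_pullback C d B X g X' Q d' g'"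
  shows "d \<in> Hom C B X" "g \<in> Hom C X' X" "d' \<in> Hom C Q X'" "g' \<in> Hom C Q B"
    "cmp C d g' = cmp C g d'"
  using assms unfolding is_pullback_def by auto

lemma pullback_factor:
  assumes "is_pullback C d B X g X' Q d' g'" "u \<in> Hom C T B" "v \<in> Hom C T X'"
    "cmp C d u = cmp C g v"
  shows "\<exists>w \<in> Hom C T Q. cmp C g' w = u \<and> cmp C d' w = v"
  using assms dom_in_Obj unfolding is_pullback_def by blast

lemma pullback_cancel:
  assumes p: "is_pullback C d B X g X' Q d' g'" and w1: "w1 \<in> Hom C T Q" and w2: "w2 \<in> Hom C T Q"
    and eq1: "cmp C g' w1 = cmp C g' w2" and eq2: "cmp C d' w1 = cmp C d' w2"
  shows "w1 = w2"
proof -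
  note pb = pullbackD[OF p]
  have "cmp C d (cmp C g' w1) = cmp C g (cmp C d' w1)"
    using cmp_assoc[OF w1 pb(4,1)] cmp_assoc[OF w1 pb(3,2)] pb(5) by simp
  then show ?thesis
    using p w1 w2 eq1 eq2 dom_in_Obj[OF w1] pb(3,4) unfolding is_pullback_def by (metis cmp_in_Hom)
qed

lemma pullback_sym: "is_pullback C d B X g X' Q d' g' \<Longrightarrow> is_pullback C g X' X d B Q g' d'"
  unfolding is_pullback_def by metis

lemma pushoutD:
  assumes "is_pushout C i A B f A' P i' f'"
  shows "i \<in> Hom C A B" "f \<in> Hom C A A'" "i' \<in> Hom C A' P" "f' \<in> Hom C B P"
    "cmp C f' i = cmp C i' f"
  using assms unfolding is_pushout_def by auto

lemma pushout_factor:
  assumes "is_pushout C i A B f A' P i' f'" "u \<in> Hom C B T" "v \<in> Hom C A' T"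
    "cmp C u i = cmp C v f"
  shows "\<exists>w \<in> Hom C P T. cmp C w f' = u \<and> cmp C w i' = v"
  using assms cod_in_Obj unfolding is_pushout_def by blast

lemma pushout_cancel:
  assumes p: "is_pushout C i A B f A' P i' f'" and w1: "w1 \<in> Hom C P T" and w2: "w2 \<in> Hom C P T"
    and eq1: "cmp C w1 f' = cmp C w2 f'" and eq2: "cmp C w1 i' = cmp C w2 i'"
  shows "w1 = w2"
proof -
  note po = pushoutD[OF p]
  have "cmp C (cmp C w1 f') i = cmp C (cmp C w1 i') f"
    using cmp_assoc[OF po(1,4) w1] cmp_assoc[OF po(2,3) w1] po(5) by simp
  then show ?thesis
    using p w1 w2 eq1 eq2 cod_in_Obj[OF w1] po(3,4) unfolding is_pushout_def by (metis cmp_in_Hom)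
qed

lemma pullback_iso:
  assumes p: "is_pullback C d B X g X' Q d' g'" and p0: "is_pullback C d B X g X' Q0 d0 g0"
  obtains \<phi> \<psi> where "\<phi> \<in> Hom C Q Q0" "\<psi> \<in> Hom C Q0 Q"
    "cmp C \<psi> \<phi> = idm C Q" "cmp C \<phi> \<psi> = idm C Q0" "cmp C d0 \<phi> = d'"
proof -
  note pb = pullbackD[OF p] and pb0 = pullbackD[OF p0]
  obtain \<phi> where \<phi>: "\<phi> \<in> Hom C Q Q0" "cmp C g0 \<phi> = g'" "cmp C d0 \<phi> = d'"
    using pullback_factor[OF p0 pb(4,3,5)] by blast
  obtain \<psi> where \<psi>: "\<psi> \<in> Hom C Q0 Q" "cmp C g' \<psi> = g0" "cmp C d' \<psi> = d0"
    using pullback_factor[OF p pb0(4,3,5)] by blast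
  have "cmp C \<psi> \<phi> = idm C Q"
    by (rule pullback_cancel[OF p])
      (use \<phi> \<psi> pb dom_in_Obj[OF pb(3)] in \<open>auto simp: cmp_assoc[symmetric] cmp_idm\<close>)
  moreover have "cmp C \<phi> \<psi> = idm C Q0"
    by (rule pullback_cancel[OF p0])
      (use \<phi> \<psi> pb0 dom_in_Obj[OF pb0(3)] in \<open>auto simp: cmp_assoc[symmetric] cmp_idm\<close>)
  ultimately show ?thesis using that \<phi> \<psi> by blast
qed

lemma kernel_pullback:
  assumes ker: "is_kernel C i A B d X" and p: "is_pullback C d B X g X' Q d' g'"
    and i': "i' \<in> Hom C A Q" "cmp C g' i' = i" "cmp C d' i' = zer C A X'"
  shows "is_kernel C i' A Q d' X'"
proof (rule is_kernelI)
  note pb = pullbackD[OF p]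
  show "i' \<in> Hom C A Q" "d' \<in> Hom C Q X'" "cmp C d' i' = zer C A X'" using i' pb by auto
next
  fix T f assume T: "T \<in> Obj C" and f: "f \<in> Hom C T Q" and d'f: "cmp C d' f = zer C T X'"
  note pb = pullbackD[OF p]
  have "cmp C d (cmp C g' f) = cmp C g (cmp C d' f)"
    using cmp_assoc[OF f pb(4,1)] cmp_assoc[OF f pb(3,2)] pb(5) by simp
  then have "cmp C d (cmp C g' f) = zer C T X" using d'f cmp_zer[OF pb(2) T] by simp
  then obtain h where h: "h \<in> Hom C T A" "cmp C i h = cmp C g' f"
    using kernel_factor[OF ker] f pb(4) by blast
  have "cmp C i' h = f"
  proof (rule pullback_cancel[OF p _ f])
    show "cmp C g' (cmp C i' h) = cmp C g' f" using cmp_assoc[OF h(1) i'(1) pb(4)] i'(2) h(2) by simp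
    show "cmp C d' (cmp C i' h) = cmp C d' f"
      using cmp_assoc[OF h(1) i'(1) pb(3)] i'(3) d'f zer_cmp[OF h(1) cod_in_Obj[OF pb(3)]] by simp
  qed (use h(1) i'(1) in blast)
  then show "\<exists>h \<in> Hom C T A. cmp C i' h = f" using h(1) by blast
next
  fix T h h' assume h: "h \<in> Hom C T A" and h': "h' \<in> Hom C T A" and eq: "cmp C i' h = cmp C i' h'"
  have "cmp C i h = cmp C i h'"
    using cmp_assoc[OF h i'(1) pullbackD(4)[OF p]] cmp_assoc[OF h' i'(1) pullbackD(4)[OF p]] i'(2) eq
    by simp
  then show "h = h'" using kernel_cancel[OF ker h h'] by blast
qed

lemma conflation_pullback:
  assumes c: "(A, B, X, i, d) \<in> Conf C" and p: "is_pullback C d B X g X' Q d' g'"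
  shows "\<exists>i'. (A, Q, X', i', d') \<in> Conf C \<and> cmp C g' i' = i"
proof -
  note conf = conflationD[OF c] and pb = pullbackD[OF p]
  have "deflation C d B X" unfolding deflation_def using c by blast
  then obtain Q0 d0 g0 where p0: "is_pullback C d B X g X' Q0 d0 g0" and "deflation C d0 Q0 X'"
    using pullback_deflation_exists pb(2) by blast
  then obtain A0 i0 where c0: "(A0, Q0, X', i0, d0) \<in> Conf C" unfolding deflation_def by blast
  obtain \<phi> \<psi> where "\<phi> \<in> Hom C Q Q0" "\<psi> \<in> Hom C Q0 Q" "cmp C \<psi> \<phi> = idm C Q"
    "cmp C \<phi> \<psi> = idm C Q0" and d0\<phi>: "cmp C d0 \<phi> = d'"
    using pullback_iso[OF p p0] by blast
  then have c1: "(A0, Q, X', cmp C \<psi> i0, d') \<in> Conf C"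
    using conflation_iso_mid[OF c0] d0\<phi> by blast
  have "cmp C d i = cmp C g (zer C A X')" using conf(5) cmp_zer[OF pb(2) conf(6)] by simp
  then obtain i' where i': "i' \<in> Hom C A Q" "cmp C g' i' = i" "cmp C d' i' = zer C A X'"
    using pullback_factor[OF p conf(3)] conf(6) cod_in_Obj[OF pb(3)] by blast
  show ?thesis
    using conflation_of_kernel[OF c1 kernel_pullback[OF conf(1) p i']] i'(2) by blast
qed

lemma cokernel_pushout:
  assumes coker: "is_cokernel C i A B d X" and p: "is_pushout C i A B f A' P i' f'"
    and d': "d' \<in> Hom C P X" "cmp C d' f' = d" "cmp C d' i' = zer C A' X"
  shows "is_cokernel C i' A' P d' X"
proof (rule is_cokernelI)
  note po = pushoutD[OF p]
  show "i' \<in> Hom C A' P" "d' \<in> Hom C P X" "cmp C d' i' = zer C A' X" using d' po by auto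
next
  fix T u assume T: "T \<in> Obj C" and u: "u \<in> Hom C P T" and ui': "cmp C u i' = zer C A' T"
  note po = pushoutD[OF p]
  have "cmp C (cmp C u f') i = cmp C (cmp C u i') f"
    using cmp_assoc[OF po(1,4) u] cmp_assoc[OF po(2,3) u] po(5) by simp
  then have "cmp C (cmp C u f') i = zer C A T" using ui' zer_cmp[OF po(2) T] by simp
  then obtain v where v: "v \<in> Hom C X T" "cmp C v d = cmp C u f'"
    using cokernel_factor[OF coker] u po(4) by blast
  have "cmp C v d' = u"
  proof (rule pushout_cancel[OF p _ u])
    show "cmp C (cmp C v d') f' = cmp C u f'" using cmp_assoc[OF po(4) d'(1) v(1)] d'(2) v(2) by simp
    show "cmp C (cmp C v d') i' = cmp C u i'"
      using cmp_assoc[OF po(3) d'(1) v(1)] d'(3) ui' cmp_zer[OF v(1) dom_in_Obj[OF po(3)]] by simp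
  qed (use v(1) d'(1) in blast)
  then show "\<exists>v \<in> Hom C X T. cmp C v d' = u" using v(1) by blast
next
  fix T v v' assume v: "v \<in> Hom C X T" and v': "v' \<in> Hom C X T" and eq: "cmp C v d' = cmp C v' d'"
  have "cmp C v d = cmp C v' d"
    using cmp_assoc[OF pushoutD(4)[OF p] d'(1) v] cmp_assoc[OF pushoutD(4)[OF p] d'(1) v'] d'(2) eq
    by simp
  then show "v = v'" using cokernel_cancel[OF coker v v'] by blast
qed

lemma conflation_pushout:
  assumes c: "(A, B, X, i, d) \<in> Conf C" and f: "f \<in> Hom C A A'"
  shows "\<exists>P i' f' d'. is_pushout C i A B f A' P i' f' \<and> (A', P, X, i', d') \<in> Conf C \<and>
           cmp C d' f' = d"
proof -
  note conf = conflationD[OF c]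
  have "inflation C i A B" unfolding inflation_def using c by blast
  then obtain P i' f' where p: "is_pushout C i A B f A' P i' f'" and "inflation C i' A' P"
    using pushout_inflation_exists f by blast
  then obtain Z e where c0: "(A', P, Z, i', e) \<in> Conf C" unfolding inflation_def by blast
  have A': "A' \<in> Obj C" using f cod_in_Obj by blast
  have "cmp C d i = cmp C (zer C A' X) f" using conf(5) zer_cmp[OF f conf(8)] by simp
  then obtain d' where d': "d' \<in> Hom C P X" "cmp C d' f' = d" "cmp C d' i' = zer C A' X"
    using pushout_factor[OF p conf(4)] A' conf(8) by blast
  show ?thesis
    using conflation_of_cokernel[OF c0 cokernel_pushout[OF conf(2) p d']] p d'(2) by blast
qed

section \<open>Split conflations and vanishing of Ext\<close>

lemma section_of_retraction:
  assumes c: "(A, B, X, i, d) \<in> Conf C" and r: "r \<in> Hom C B A" and ri: "cmp C r i = idm C A"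
  shows "\<exists>s \<in> Hom C X B. cmp C d s = idm C X"
proof -
  note conf = conflationD[OF c]
  have ir: "cmp C i r \<in> Hom C B B" using r conf by blast
  define t where "t = pls C (idm C B) (neg C (cmp C i r))"
  have t: "t \<in> Hom C B B" unfolding t_def using ir conf by blast
  have "cmp C t i = pls C i (neg C (cmp C i (cmp C r i)))"
    unfolding t_def using cmp_pls_left[OF conf(3) idm_in_Hom[OF conf(7)] neg_in_Hom[OF ir]]
      idm_cmp[OF conf(3)] neg_cmp[OF conf(3) ir] cmp_assoc[OF conf(3) r conf(3)] by simp
  also have "\<dots> = zer C A B" using ri cmp_idm[OF conf(3)] pls_neg[OF conf(3)] by simp
  finally obtain s where s: "s \<in> Hom C X B" "cmp C s d = t"
    using cokernel_factor[OF conf(2) t] by blast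
  have "cmp C d t = pls C d (neg C (cmp C (cmp C d i) r))"
    unfolding t_def using cmp_pls_right[OF idm_in_Hom[OF conf(7)] neg_in_Hom[OF ir] conf(4)]
      cmp_idm[OF conf(4)] cmp_neg[OF ir conf(4)] cmp_assoc[OF r conf(3,4)] by simp
  also have "\<dots> = d"
    using conf(5) zer_cmp[OF r conf(8)] neg_zer[OF conf(7,8)] pls_zer[OF conf(4)] by simp
  finally have "cmp C (cmp C d s) d = cmp C (idm C X) d"
    using cmp_assoc[OF conf(4) s(1) conf(4)] s(2) idm_cmp[OF conf(4)] by simp
  then have "cmp C d s = idm C X"
    using cokernel_cancel[OF conf(2) cmp_in_Hom[OF s(1) conf(4)] idm_in_Hom[OF conf(8)]] by blast
  then show ?thesis using s by blast
qed

lemma biproduct_of_section: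
  assumes c: "(A, B, X, i, d) \<in> Conf C" and s: "s \<in> Hom C X B" and ds: "cmp C d s = idm C X"
  shows "\<exists>r. is_biproduct C X A B s i d r"
proof -
  note conf = conflationD[OF c]
  have sd: "cmp C s d \<in> Hom C B B" using s conf by blast
  define t where "t = pls C (idm C B) (neg C (cmp C s d))"
  have "cmp C d t = pls C d (neg C (cmp C (cmp C d s) d))"
    unfolding t_def using cmp_pls_right[OF idm_in_Hom[OF conf(7)] neg_in_Hom[OF sd] conf(4)]
      cmp_idm[OF conf(4)] cmp_neg[OF sd conf(4)] cmp_assoc[OF conf(4) s conf(4)] by simp
  also have "\<dots> = zer C B X" using ds idm_cmp[OF conf(4)] pls_neg[OF conf(4)] by simp
  finally obtain r where r: "r \<in> Hom C B A" "cmp C i r = t"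
    using kernel_factor[OF conf(1)] t_def sd conf(7) by blast
  have ti: "cmp C t i = pls C i (neg C (cmp C s (cmp C d i)))"
    unfolding t_def using cmp_pls_left[OF conf(3) idm_in_Hom[OF conf(7)] neg_in_Hom[OF sd]]
      idm_cmp[OF conf(3)] neg_cmp[OF conf(3) sd] cmp_assoc[OF conf(3,4) s] by simp
  have "cmp C i (cmp C r i) = cmp C i (idm C A)"
    using cmp_assoc[OF conf(3) r(1) conf(3)] r(2) ti conf(5) cmp_zer[OF s conf(6)]
      neg_zer[OF conf(6,7)] pls_zer[OF conf(3)] cmp_idm[OF conf(3)] by simp
  then have ri: "cmp C r i = idm C A"
    using kernel_cancel[OF conf(1) cmp_in_Hom[OF conf(3) r(1)] idm_in_Hom[OF conf(6)]] by blast
  have "cmp C i (cmp C r s) = pls C s (neg C (cmp C s (cmp C d s)))"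
    using cmp_assoc[OF s r(1) conf(3)] r(2) cmp_pls_left[OF s idm_in_Hom[OF conf(7)] neg_in_Hom[OF sd]]
      idm_cmp[OF s] neg_cmp[OF s sd] cmp_assoc[OF s conf(4) s] unfolding t_def by simp
  also have "\<dots> = cmp C i (zer C X A)"
    using ds cmp_idm[OF s] pls_neg[OF s] cmp_zer[OF conf(3,8)] by simp
  finally have rs: "cmp C r s = zer C X A"
    using kernel_cancel[OF conf(1) cmp_in_Hom[OF s r(1)] zer_in_Hom[OF conf(8,6)]] by blast
  have "pls C (cmp C s d) t = pls C (pls C (cmp C s d) (neg C (cmp C s d))) (idm C B)"
    unfolding t_def using pls_commute[OF idm_in_Hom[OF conf(7)] neg_in_Hom[OF sd]]
      pls_assoc[OF sd neg_in_Hom[OF sd] idm_in_Hom[OF conf(7)]] by simp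
  then have "pls C (cmp C s d) (cmp C i r) = idm C B"
    using r(2) pls_neg[OF sd] zer_pls[OF idm_in_Hom[OF conf(7)]] by simp
  then show ?thesis unfolding is_biproduct_def using conf s r(1) ds ri rs by blast
qed

lemma conflation_composite_pushout:
  assumes ck: "(K, Q, I, k, g) \<in> Conf C" and cj: "(Q, E, Y, j, p) \<in> Conf C"
    and po: "is_pushout C j Q E g I P i' f'"
  shows "(K, E, P, cmp C j k, f') \<in> Conf C"
proof -
  note confk = conflationD[OF ck] and confj = conflationD[OF cj] and pushD = pushoutD[OF po]
  have "inflation C (cmp C j k) K E"
    using inflation_cmp ck cj unfolding inflation_def by blast
  then obtain Z c where cz: "(K, E, Z, cmp C j k, c) \<in> Conf C" unfolding inflation_def by blast
  have coker: "is_cokernel C (cmp C j k) K E f' P"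
  proof (rule is_cokernelI)
    show "cmp C j k \<in> Hom C K E" "f' \<in> Hom C E P" using confk confj pushD by auto
    have "cmp C f' (cmp C j k) = cmp C i' (cmp C g k)"
      using cmp_assoc[OF confk(3) confj(3) pushD(4)] pushD(5) cmp_assoc[OF confk(3,4) pushD(3)] by simp
    then show "cmp C f' (cmp C j k) = zer C K P" using confk(5) cmp_zer[OF pushD(3) confk(6)] by simp
  next
    fix T u assume u: "u \<in> Hom C E T" and uz: "cmp C u (cmp C j k) = zer C K T"
    have "cmp C (cmp C u j) k = zer C K T" using cmp_assoc[OF confk(3) confj(3) u] uz by simp
    then obtain v where v: "v \<in> Hom C I T" "cmp C v g = cmp C u j"
      using cokernel_factor[OF confk(2)] u confj(3) by blast
    then show "\<exists>w \<in> Hom C P T. cmp C w f' = u" using pushout_factor[OF po u v(1)] by metis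
  next
    fix T w w' assume w: "w \<in> Hom C P T" and w': "w' \<in> Hom C P T" and eq: "cmp C w f' = cmp C w' f'"
    have "cmp C (cmp C h i') g = cmp C (cmp C h f') j" if "h \<in> Hom C P T" for h
      using cmp_assoc[OF confk(4) pushD(3) that] cmp_assoc[OF confj(3) pushD(4) that] pushD(5) by simp
    then have "cmp C (cmp C w i') g = cmp C (cmp C w' i') g" using w w' eq by metis
    then have "cmp C w i' = cmp C w' i'"
      using cokernel_cancel[OF confk(2)] w w' pushD(3) by blast
    then show "w = w'" using pushout_cancel[OF po w w' eq] by blast
  qed
  show ?thesis using conflation_of_cokernel[OF cz coker] .
qed

lemma ext1_zero_lift:
  assumes ext: "ext1_zero C X' Y" and c: "(Y, B, X, i, d) \<in> Conf C" and g: "g \<in> Hom C X' X"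
  shows "\<exists>h \<in> Hom C X' B. cmp C d h = g"
proof -
  have "deflation C d B X" unfolding deflation_def using c by blast
  then obtain Q d' g' where p: "is_pullback C d B X g X' Q d' g'"
    using pullback_deflation_exists g by blast
  note pb = pullbackD[OF p]
  obtain i' where "(Y, Q, X', i', d') \<in> Conf C" using conflation_pullback[OF c p] by blast
  then obtain s where s: "s \<in> Hom C X' Q" "cmp C d' s = idm C X'"
    using ext unfolding ext1_zero_def by blast
  have "cmp C d (cmp C g' s) = g"
    using cmp_assoc[OF s(1) pb(4,1)] pb(5) cmp_assoc[OF s(1) pb(3,2)] s(2) cmp_idm[OF g] by simp
  then show ?thesis using s(1) pb(4) by blast
qed

lemma ext1_zero_retract:
  assumes ext: "ext1_zero C S Y" and p: "p \<in> Hom C S A" and s: "s \<in> Hom C A S"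
    and ps: "cmp C p s = idm C A"
  shows "ext1_zero C A Y"
  unfolding ext1_zero_def
proof (intro allI impI)
  fix B i d assume c: "(Y, B, A, i, d) \<in> Conf C"
  then obtain h where h: "h \<in> Hom C S B" "cmp C d h = p" using ext1_zero_lift[OF ext _ p] by blast
  have "cmp C d (cmp C h s) = idm C A" using cmp_assoc[OF s h(1) conflationD(4)[OF c]] h(2) ps by simp
  then show "\<exists>s \<in> Hom C A B. cmp C d s = idm C A" using h(1) s by blast
qed

text \<open>Push a conflation Q >-> E ->> X out along Q ->> I: it splits as I is injective, and the
  splitting lifts along the composite conflation K >-> E ->> P because Ext^1(X, K) = 0.\<close>
lemma ext1_zero_injective_extension:
  assumes ck: "(K, Q, I, k, g) \<in> Conf C" and inj: "injective_object C I"
    and ext: "ext1_zero C X K"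
  shows "ext1_zero C X Q"
  unfolding ext1_zero_def
proof (intro allI impI)
  fix E j p assume cj: "(Q, E, X, j, p) \<in> Conf C"
  obtain P i' f' p' where po: "is_pushout C j Q E g I P i' f'"
    and cp: "(I, P, X, i', p') \<in> Conf C" and p'f': "cmp C p' f' = p"
    using conflation_pushout[OF cj conflationD(4)[OF ck]] by blast
  obtain r where "r \<in> Hom C P I" "cmp C r i' = idm C I"
    using inj cp idm_in_Hom[OF conflationD(8)[OF ck]] unfolding injective_object_def by blast
  then obtain \<tau> where \<tau>: "\<tau> \<in> Hom C X P" "cmp C p' \<tau> = idm C X"
    using section_of_retraction[OF cp] by blast
  obtain h where h: "h \<in> Hom C X E" "cmp C f' h = \<tau>"
    using ext1_zero_lift[OF ext conflation_composite_pushout[OF ck cj po] \<tau>(1)] by blast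
  have "cmp C p h = idm C X"
    using p'f' cmp_assoc[OF h(1) pushoutD(4)[OF po] conflationD(4)[OF cp]] h(2) \<tau>(2) by simp
  then show "\<exists>s \<in> Hom C X E. cmp C p s = idm C X" using h(1) by blast
qed

section \<open>Cotorsion pairs\<close>

lemma closed_under_summands_left_perp: "closed_under_summands C (left_perp C N)"
  unfolding closed_under_summands_def
proof (intro ballI allI impI)
  fix S A B i1 i2 p1 p2
  assume S: "S \<in> left_perp C N" and "is_biproduct C A B S i1 i2 p1 p2"
  then have "A \<in> Obj C" "p1 \<in> Hom C S A" "i1 \<in> Hom C A S" "cmp C p1 i1 = idm C A"
    unfolding is_biproduct_def by auto
  then show "A \<in> left_perp C N" using S ext1_zero_retract unfolding left_perp_def by blast
qed

lemma left_perp_right_perp_eq: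
  assumes "M \<subseteq> Obj C" "special_precovering C M" "closed_under_summands C M"
  shows "left_perp C (right_perp C M) = M"
proof
  show "M \<subseteq> left_perp C (right_perp C M)"
    using assms(1) unfolding left_perp_def right_perp_def by blast
next
  show "left_perp C (right_perp C M) \<subseteq> M"
  proof
    fix X assume X: "X \<in> left_perp C (right_perp C M)"
    obtain K M0 i d where c: "(K, M0, X, i, d) \<in> Conf C" and M0: "M0 \<in> M"
      and K: "\<forall>M' \<in> M. ext1_zero C M' K"
      using assms(2) X unfolding special_precovering_def left_perp_def by blast
    have "K \<in> right_perp C M" unfolding right_perp_def using K conflationD(6)[OF c] by blast
    then obtain s where "s \<in> Hom C X M0" "cmp C d s = idm C X"
      using X c unfolding left_perp_def ext1_zero_def by blast
    then obtain r where "is_biproduct C X K M0 s i d r" using biproduct_of_section[OF c] by blast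
    then show "X \<in> M" using assms(3) M0 unfolding closed_under_summands_def by blast
  qed
qed

lemma special_preenvelope_right_perp:
  assumes "enough_injectives C" "special_precovering C M" "X \<in> Obj C"
  shows "\<exists>N2 M2 i d. (X, N2, M2, i, d) \<in> Conf C \<and> N2 \<in> right_perp C M \<and> M2 \<in> M"
proof -
  obtain I Y x e where cx: "(X, I, Y, x, e) \<in> Conf C" and inj: "injective_object C I"
    using assms(1,3) unfolding enough_injectives_def by blast
  obtain K M0 k d where ck: "(K, M0, Y, k, d) \<in> Conf C" and M0: "M0 \<in> M"
    and K: "\<forall>M' \<in> M. ext1_zero C M' K"
    using assms(2) conflationD(8)[OF cx] unfolding special_precovering_def by blast
  have "deflation C e I Y" using cx unfolding deflation_def by blast
  then obtain P d1 g1 where pb: "is_pullback C e I Y d M0 P d1 g1"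
    using pullback_deflation_exists conflationD(4)[OF ck] by blast
  obtain x1 where cx1: "(X, P, M0, x1, d1) \<in> Conf C" using conflation_pullback[OF cx pb] by blast
  obtain k1 where "(K, P, I, k1, g1) \<in> Conf C"
    using conflation_pullback[OF ck pullback_sym[OF pb]] by blast
  then have "P \<in> right_perp C M"
    unfolding right_perp_def using conflationD(7)[OF cx1] ext1_zero_injective_extension inj K by blast
  then show ?thesis using cx1 M0 by blast
qed

end

theorem mainTheorem10:
  fixes C :: "('o, 'm) excat" and M :: "'o set"
  assumes "exact_category C"
    and "enough_injectives C"
    and "M \<subseteq> Obj C"
  shows "(\<exists>N. complete_cotorsion_pair C M N) \<longleftrightarrow>
           (special_precovering C M \<and> closed_under_summands C M)"
proof -
  interpret exact_cat C by unfold_locales (fact assms(1))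
  show ?thesis
  proof
    assume "\<exists>N. complete_cotorsion_pair C M N"
    then obtain N where N: "N = right_perp C M" and M: "M = left_perp C N"
      and "\<forall>X \<in> Obj C. \<exists>N1 M1 i d. (N1, M1, X, i, d) \<in> Conf C \<and> M1 \<in> M \<and> N1 \<in> N"
      unfolding complete_cotorsion_pair_def by blast
    then have "special_precovering C M"
      unfolding special_precovering_def N right_perp_def by blast
    moreover have "closed_under_summands C M" using M closed_under_summands_left_perp by simp
    ultimately show "special_precovering C M \<and> closed_under_summands C M" ..
  next
    assume M: "special_precovering C M \<and> closed_under_summands C M"
    then have "\<forall>X \<in> Obj C. \<exists>N1 M1 i d. (N1, M1, X, i, d) \<in> Conf C \<and> M1 \<in> M \<and> N1 \<in> right_perp C M"
      unfolding special_precovering_def right_perp_def using conflationD(6) by blast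
    then have "complete_cotorsion_pair C M (right_perp C M)"
      unfolding complete_cotorsion_pair_def
      using M assms(2,3) left_perp_right_perp_eq special_preenvelope_right_perp by auto
    then show "\<exists>N. complete_cotorsion_pair C M N" by blast
  qed
qed

end
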